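(* Let $T$ be a positive linear map on $\mathcal{M}_d(\mathbb{C})$ which is not completely positive. Then there exists $Y\in\mathcal{M}_d(\mathbb{C})$ such that the map $T'(\rho):=Y^\dagger T(\rho)Y$ is positive but its matrix representation $\hat T'$ (as an operator on $\mathcal{M}_d(\mathbb{C})$) satisfies $\mathrm{tr}[\hat T']<0$. In particular, the first moment of the spectrum of a positive map can be negative.
   Context: Positive: maps positive semidefinite matrices to positive semidefinite matrices; completely positive: $T\otimes\mathrm{id}_d$ is positive. $\mathrm{tr}[\hat T']$ equals the sum of the eigenvalues of $T'$ counted with algebraic multiplicity. *)

theory Defs
  imports "HOL-Analysis.Analysis" "HOL-Library.Complex_Order"
begin

text \<open>d x d complex matrices are modelled as complex^'n^'n, with d = CARD('n).
  The complex order (HOL-Library.Complex_Order) is used: z \<ge> 0 means z is real and nonnegative.\<close>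

definition psd :: "complex^'n^'n \<Rightarrow> bool" where
  "psd A \<longleftrightarrow> (\<forall>x::complex^'n. 0 \<le> (\<Sum>i\<in>UNIV. \<Sum>j\<in>UNIV. cnj (x$i) * A$i$j * x$j))"

definition cmat_scale :: "complex \<Rightarrow> complex^'n^'m \<Rightarrow> complex^'n^'m" where
  "cmat_scale c A = (\<chi> i j. c * A$i$j)"

definition cmat_linear :: "(complex^'n^'n \<Rightarrow> complex^'n^'n) \<Rightarrow> bool" where
  "cmat_linear T \<longleftrightarrow> (\<forall>A B. T (A + B) = T A + T B) \<and> (\<forall>c A. T (cmat_scale c A) = cmat_scale c (T A))"

definition positive_map :: "(complex^'n^'n \<Rightarrow> complex^'n^'n) \<Rightarrow> bool" where
  "positive_map T \<longleftrightarrow> (\<forall>A. psd A \<longrightarrow> psd (T A))"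

text \<open>T \<otimes> id_d acting on M_d \<otimes> M_d = M_{d^2}, indices ((i,k),(j,l)); T acts on the first factor.\<close>
definition tensor_id :: "(complex^'n^'n \<Rightarrow> complex^'n^'n) \<Rightarrow> complex^('n\<times>'n)^('n\<times>'n) \<Rightarrow> complex^('n\<times>'n)^('n\<times>'n)" where
  "tensor_id T X = (\<chi> p q. T (\<chi> i j. X $ (i, snd p) $ (j, snd q)) $ fst p $ fst q)"

definition completely_positive :: "(complex^'n^'n \<Rightarrow> complex^'n^'n) \<Rightarrow> bool" where
  "completely_positive T \<longleftrightarrow> (\<forall>X. psd X \<longrightarrow> psd (tensor_id T X))"

definition adj :: "complex^'n^'n \<Rightarrow> complex^'n^'n" where
  "adj Y = (\<chi> i j. cnj (Y$j$i))"

definition mat_unit :: "'n \<Rightarrow> 'n \<Rightarrow> complex^'n^'n" where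
  "mat_unit a b = (\<chi> i j. if i = a \<and> j = b then 1 else 0)"

text \<open>Trace of the matrix representation of T as a linear operator on M_d,
  computed in the standard basis E_ab.\<close>
definition map_trace :: "(complex^'n^'n \<Rightarrow> complex^'n^'n) \<Rightarrow> complex" where
  "map_trace T = (\<Sum>a\<in>UNIV. \<Sum>b\<in>UNIV. T (mat_unit a b) $ a $ b)"

end

theory Submission
  imports Defs
begin

text \<open>
  Suppose, to the contrary, that every congruence \<open>T\<^sub>Y(\<rho>) = Y\<^sup>\<dagger> T(\<rho>) Y\<close> of the
  positive map \<open>T\<close> has \<open>tr[T\<^sub>Y] \<ge> 0\<close>; such congruences are always positive, and their traces are
  real because positive maps preserve Hermiticity.  For vectors \<open>x, w \<in> \<complex>\<^sup>d \<otimes> \<complex>\<^sup>d\<close> one has the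
  identity \<open>\<langle>w, (T \<otimes> id)(x x\<^sup>\<dagger>) w\<rangle> = tr[T\<^sub>Y]\<close> with \<open>Y = W X\<^sup>\<dagger>\<close>, where \<open>W, X\<close> are \<open>w, x\<close> reshaped
  into \<open>d \<times> d\<close> matrices.  Hence \<open>T \<otimes> id\<close> is nonnegative on rank-one projections, and by linearity
  on every positive semidefinite matrix, i.e. \<open>T\<close> is completely positive -- a contradiction.
\<close>

definition qf :: "complex^'m^'m \<Rightarrow> complex^'m \<Rightarrow> complex" where
  "qf X v = (\<Sum>i\<in>UNIV. \<Sum>j\<in>UNIV. cnj (v$i) * X$i$j * v$j)"

definition outer :: "complex^'m \<Rightarrow> complex^'m^'m" where
  "outer x = (\<chi> i j. x$i * cnj (x$j))"

definition uvec :: "'m \<Rightarrow> complex \<Rightarrow> complex^'m" where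
  "uvec s t = (\<chi> k. if k = s then t else 0)"

lemma uvec_nth [simp]: "uvec s t $ k = (if k = s then t else 0)"
  by (simp add: uvec_def)

lemma psd_qf: "psd X \<longleftrightarrow> (\<forall>v. 0 \<le> qf X v)"
  by (simp add: psd_def qf_def)

lemma qf_add: "qf (A + B) v = qf A v + qf B v"
  unfolding qf_def by (simp add: algebra_simps sum.distrib)

lemma qf_diff: "qf (A - B) v = qf A v - qf B v"
  unfolding qf_def by (simp add: algebra_simps sum_subtractf)

lemma qf_scale: "qf (cmat_scale c A) v = c * qf A v"
  unfolding qf_def cmat_scale_def by (simp add: algebra_simps sum_distrib_left)

lemma qf_outer: "qf (outer x) v = (\<Sum>i\<in>UNIV. cnj (v$i) * x$i) * cnj (\<Sum>i\<in>UNIV. cnj (v$i) * x$i)"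
  unfolding qf_def outer_def cnj_sum sum_product by (intro sum.cong refl) (simp add: algebra_simps)

lemma psd_outer: "psd (outer x)"
  unfolding psd_qf qf_outer complex_mult_cnj by (simp add: less_eq_complex_def)

lemma qf_add_uvec:
  "qf X (v + uvec s t) =
     qf X v + cnj t * (\<Sum>j\<in>UNIV. X$s$j * v$j) + t * (\<Sum>i\<in>UNIV. cnj (v$i) * X$i$s) + cnj t * t * X$s$s"
proof -
  have row: "(\<Sum>j\<in>UNIV. cnj ((v + uvec s t)$i) * X$i$j * (v + uvec s t)$j)
      = (\<Sum>j\<in>UNIV. cnj (v$i) * X$i$j * v$j) + cnj (v$i) * X$i$s * t
        + (if i = s then (\<Sum>j\<in>UNIV. cnj t * X$s$j * v$j) + cnj t * X$s$s * t else 0)" for i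
  proof -
    have "(\<Sum>j\<in>UNIV. cnj ((v + uvec s t)$i) * X$i$j * (v + uvec s t)$j)
      = (\<Sum>j\<in>UNIV. (cnj (v$i) * X$i$j * v$j + (if i = s then cnj t * X$s$j * v$j else 0))
           + (if j = s then (cnj (v$i) + (if i = s then cnj t else 0)) * X$i$s * t else 0))"
      by (intro sum.cong refl) (auto simp: algebra_simps)
    also have "\<dots> = (\<Sum>j\<in>UNIV. cnj (v$i) * X$i$j * v$j) + cnj (v$i) * X$i$s * t
        + (if i = s then (\<Sum>j\<in>UNIV. cnj t * X$s$j * v$j) + cnj t * X$s$s * t else 0)"
      by (simp only: sum.distrib sum.delta) (auto simp: algebra_simps)
    finally show ?thesis .
  qed
  show ?thesis
    unfolding qf_def row
    by (simp only: sum.distrib sum.delta) (auto simp: algebra_simps sum_distrib_left)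
qed

lemma qf_uvec: "qf X (uvec s t) = cnj t * t * X$s$s"
  using qf_add_uvec[of X 0 s t] by (simp add: qf_def)

lemma qf_two_uvec: "qf X (uvec i 1 + uvec s t) = X$i$i + cnj t * X$s$i + t * X$i$s + cnj t * t * X$s$s"
proof -
  have "(\<Sum>j\<in>UNIV. X$s$j * uvec i 1 $ j) = X$s$i" "(\<Sum>j\<in>UNIV. cnj (uvec i 1 $ j) * X$j$s) = X$i$s"
    by (simp_all add: if_distrib[where f="\<lambda>x. _ * x"] if_distrib[where f="\<lambda>x. x * _"]
        if_distrib[where f=cnj] cong: if_cong)
  then show ?thesis using qf_add_uvec[of X "uvec i 1" s t] qf_uvec[of X i 1] by simp
qed

lemma psd_diag_nonneg: "psd X \<Longrightarrow> 0 \<le> X$i$i"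
  using qf_uvec[of X i 1] by (simp add: psd_qf) (metis)

text \<open>Positive semidefinite matrices are Hermitian (the order on \<open>complex\<close> forces the form to be real).\<close>
lemma psd_herm:
  assumes "psd X" shows "X$j$i = cnj (X$i$j)"
proof -
  have real: "Im (qf X v) = 0" for v
    using assms unfolding psd_qf less_eq_complex_def by (metis zero_complex.sel(2))
  have "Im (X$i$i) = 0" "Im (X$j$j) = 0"
    using psd_diag_nonneg[OF assms] by (auto simp: less_eq_complex_def)
  with real[of "uvec i 1 + uvec j 1"] real[of "uvec i 1 + uvec j \<i>"] show ?thesis
    unfolding qf_two_uvec by (simp add: complex_eq_iff)
qed

lemma psd_zero_row:
  assumes psd: "psd X" and diag: "X$s$s = 0" shows "X$s$j = 0"
proof (rule ccontr)
  define z where "z = X$s$j"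
  define n where "n = (Re z)\<^sup>2 + (Im z)\<^sup>2"
  assume "X$s$j \<noteq> 0"
  then have npos: "n > 0"
    unfolding n_def z_def using complex_neq_0 by blast
  define r where "r = (Re (X$j$j) + 1) / (2 * n)"
  define t where "t = - (of_real r * z)"
  have "X$j$s = cnj z" using psd_herm[OF psd, of s j] z_def by simp
  moreover have "0 \<le> qf X (uvec j 1 + uvec s t)" using psd psd_qf by blast
  ultimately have "0 \<le> Re (X$j$j + cnj t * z + t * cnj z)"
    unfolding qf_two_uvec using diag z_def by (simp add: less_eq_complex_def)
  moreover have "Re (cnj t * z) = - r * n" "Re (t * cnj z) = - r * n"
    unfolding t_def n_def by (simp_all add: power2_eq_square algebra_simps)
  moreover have "2 * r * n = Re (X$j$j) + 1"
    unfolding r_def using npos by simp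
  ultimately show False by simp
qed

text \<open>One step of the Cholesky (Schur complement) elimination: subtract from \<open>X\<close> the rank-one
  matrix spanned by its \<open>s\<close>-th column, normalised by the pivot \<open>X$s$s\<close>.\<close>
definition peel :: "complex^'m^'m \<Rightarrow> 'm \<Rightarrow> complex^'m^'m" where
  "peel X s = X - cmat_scale (inverse (X$s$s)) (outer (column s X))"

lemma peel_nth: "peel X s $i$j = X$i$j - inverse (X$s$s) * (X$i$s * cnj (X$j$s))"
  by (simp add: peel_def cmat_scale_def outer_def column_def)

lemma peel_decomp: "X = peel X s + cmat_scale (inverse (X$s$s)) (outer (column s X))"
  by (simp add: peel_def)

lemma peel_row_s:
  assumes "psd X" shows "peel X s $s$j = 0"
proof (cases "X$s$s = 0")
  case True
  then show ?thesis using psd_zero_row[OF assms] by (simp add: peel_nth)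
next
  case False
  then show ?thesis using psd_herm[OF assms, of s j] by (simp add: peel_nth field_simps)
qed

lemma peel_zero_row: "(\<And>k. X$i$k = 0) \<Longrightarrow> peel X s $i$j = 0"
  by (simp add: peel_nth)

text \<open>The Schur complement of a positive semidefinite matrix is positive semidefinite: its form
  at \<open>v\<close> equals the form of \<open>X\<close> at a suitable perturbation of \<open>v\<close> in the \<open>s\<close>-th coordinate.\<close>
lemma peel_psd:
  assumes psd: "psd X" and pivot: "X$s$s \<noteq> 0"
  shows "psd (peel X s)"
  unfolding psd_qf
proof
  fix v
  define c where "c = X$s$s"
  define \<beta> where "\<beta> = (\<Sum>i\<in>UNIV. cnj (v$i) * X$i$s)"
  have c_real: "cnj c = c"
    using psd_diag_nonneg[OF psd, of s] unfolding c_def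
    by (simp add: less_eq_complex_def complex_eq_iff)
  have row_s: "(\<Sum>j\<in>UNIV. X$s$j * v$j) = cnj \<beta>"
    unfolding \<beta>_def cnj_sum using psd_herm[OF psd] by (intro sum.cong refl) (metis complex_cnj_cnj complex_cnj_mult mult.commute)
  have "qf (peel X s) v = qf X v - inverse c * (\<beta> * cnj \<beta>)"
    unfolding peel_def qf_diff qf_scale qf_outer \<beta>_def c_def by (simp add: column_def)
  also have "\<dots> = qf X (v + uvec s (- cnj \<beta> / c))"
    unfolding qf_add_uvec row_s \<beta>_def[symmetric] c_def[symmetric]
    using pivot c_real by (simp add: c_def field_simps)
  finally show "0 \<le> qf (peel X s) v" using psd psd_qf by metis
qed

text \<open>By induction over the set of
  rows that may be nonzero, peeling off one pivot at a time.\<close>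
lemma psd_functional_nonneg_rows:
  fixes L :: "complex^'m^'m \<Rightarrow> complex"
  assumes add: "\<And>A B. L (A + B) = L A + L B"
    and scale: "\<And>c A. L (cmat_scale c A) = c * L A"
    and rank_one: "\<And>x. 0 \<le> L (outer x)"
    and "finite S" "psd X" "\<And>i j. i \<notin> S \<Longrightarrow> X$i$j = 0"
  shows "0 \<le> L X"
  using assms(4-6)
proof (induction S arbitrary: X rule: finite_induct)
  case empty
  then have "X = 0" by (simp add: vec_eq_iff)
  then show ?case using add[of 0 0] by simp
next
  case (insert s S)
  show ?case
  proof (cases "X$s$s = 0")
    case True
    then have "X$i$j = 0" if "i \<notin> S" for i j
      using insert.prems psd_zero_row that by (cases "i = s") auto
    then show ?thesis using insert.IH insert.prems(1) by blast
  next
    case False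
    have "peel X s $i$j = 0" if "i \<notin> S" for i j
    proof (cases "i = s")
      case True
      then show ?thesis using peel_row_s[OF insert.prems(1)] by simp
    next
      case False
      then show ?thesis using that insert.prems(2) by (intro peel_zero_row) auto
    qed
    then have "0 \<le> L (peel X s)"
      using insert.IH peel_psd[OF insert.prems(1) False] by blast
    moreover have "0 \<le> inverse (X$s$s) * L (outer (column s X))"
      using psd_diag_nonneg[OF insert.prems(1)] rank_one
      by (intro mult_nonneg_nonneg) (auto simp: less_eq_complex_def)
    ultimately show ?thesis
      by (subst peel_decomp[of X s]) (simp add: add scale)
  qed
qed

lemma psd_functional_nonneg:
  fixes L :: "complex^'m^'m \<Rightarrow> complex"
  assumes "\<And>A B. L (A + B) = L A + L B" "\<And>c A. L (cmat_scale c A) = c * L A"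
    and "\<And>x. 0 \<le> L (outer x)" and "psd X"
  shows "0 \<le> L X"
  using psd_functional_nonneg_rows[OF assms(1-3) _ assms(4), of UNIV] by simp

lemma lin_add: "cmat_linear T \<Longrightarrow> T (A + B) = T A + T B"
  unfolding cmat_linear_def by blast

lemma lin_scale: "cmat_linear T \<Longrightarrow> T (cmat_scale c A) = cmat_scale c (T A)"
  unfolding cmat_linear_def by blast

lemma lin_sum:
  assumes "cmat_linear T" shows "T (sum f S) = (\<Sum>x\<in>S. T (f x))"
proof -
  have zero: "T 0 = 0" using lin_add[OF assms, of 0 0] by simp
  show ?thesis
  proof (cases "finite S")
    case True
    then show ?thesis by (induction S rule: finite_induct) (simp_all add: zero lin_add[OF assms])
  qed (simp add: zero)
qed

lemma mat_expand: "M = (\<Sum>a\<in>UNIV. \<Sum>b\<in>UNIV. cmat_scale (M$a$b) (mat_unit a b))"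
proof -
  have "M$x$y * (if i = x \<and> j = y then 1 else 0) = (if x = i then (if y = j then M$x$y else 0) else 0)"
    for i j x y by auto
  moreover have "(\<Sum>y\<in>A. if P then f y else 0) = (if P then (\<Sum>y\<in>A. f y) else 0)"
    for P and f :: "'a \<Rightarrow> complex" and A by simp
  ultimately show ?thesis
    by (simp add: vec_eq_iff sum_component cmat_scale_def mat_unit_def cong: if_cong)
qed

lemma lin_expand_entry:
  assumes "cmat_linear T"
  shows "T M $k$l = (\<Sum>a\<in>UNIV. \<Sum>b\<in>UNIV. M$a$b * T (mat_unit a b) $k$l)"
proof -
  have "T M = (\<Sum>a\<in>UNIV. \<Sum>b\<in>UNIV. cmat_scale (M$a$b) (T (mat_unit a b)))"
    by (subst mat_expand[of M]) (simp add: lin_sum[OF assms] lin_scale[OF assms])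
  then show ?thesis by (simp add: sum_component cmat_scale_def)
qed

text \<open>It follows by polarisation, applying positivity to the rank-one
  projections onto \<open>e\<^sub>a\<close>, \<open>e\<^sub>b\<close>, \<open>e\<^sub>a + e\<^sub>b\<close> and \<open>e\<^sub>a + i e\<^sub>b\<close>.\<close>
lemma positive_map_units_herm:
  assumes lin: "cmat_linear T" and pos: "positive_map T"
  shows "T (mat_unit b a) $l$k = cnj (T (mat_unit a b) $k$l)"
proof -
  have herm: "T (outer x) $l$k = cnj (T (outer x) $k$l)" for x
    using pos psd_outer psd_herm unfolding positive_map_def by blast
  have unit: "outer (uvec a 1) = mat_unit a a" for a
    by (auto simp: vec_eq_iff mat_unit_def outer_def)
  have sum1: "outer (uvec a 1 + uvec b 1) = mat_unit a a + mat_unit a b + mat_unit b a + mat_unit b b"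
    by (auto simp: vec_eq_iff mat_unit_def outer_def)
  have sumi: "outer (uvec a 1 + uvec b \<i>)
      = mat_unit a a + cmat_scale (-\<i>) (mat_unit a b) + cmat_scale \<i> (mat_unit b a) + mat_unit b b"
    by (auto simp: vec_eq_iff mat_unit_def outer_def cmat_scale_def complex_eq_iff)
  define A where "A = T (mat_unit a b)"
  define B where "B = T (mat_unit b a)"
  define C where "C = T (mat_unit a a)"
  define D where "D = T (mat_unit b b)"
  have C: "C$l$k = cnj (C$k$l)" and D: "D$l$k = cnj (D$k$l)"
    unfolding C_def D_def using herm unit by metis+
  have "T (outer (uvec a 1 + uvec b 1)) = C + A + B + D"
    unfolding sum1 A_def B_def C_def D_def by (simp add: lin_add[OF lin])
  then have sum_eq: "A$l$k + B$l$k = cnj (A$k$l) + cnj (B$k$l)"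
    using herm[of "uvec a 1 + uvec b 1"] C D by simp
  have "T (outer (uvec a 1 + uvec b \<i>)) = C + cmat_scale (-\<i>) A + cmat_scale \<i> B + D"
    unfolding sumi A_def B_def C_def D_def by (simp add: lin_add[OF lin] lin_scale[OF lin])
  then have "\<i> * (B$l$k - A$l$k) = \<i> * (cnj (A$k$l) - cnj (B$k$l))"
    using herm[of "uvec a 1 + uvec b \<i>"] C D by (simp add: cmat_scale_def algebra_simps)
  then have diff_eq: "B$l$k - A$l$k = cnj (A$k$l) - cnj (B$k$l)" by simp
  have "2 * B$l$k = (A$l$k + B$l$k) + (B$l$k - A$l$k)" by simp
  also have "\<dots> = 2 * cnj (A$k$l)" unfolding sum_eq diff_eq by simp
  finally have "B$l$k = cnj (A$k$l)" by simp
  then show ?thesis unfolding A_def B_def by simp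
qed

lemma positive_map_trace_real:
  assumes "cmat_linear T" "positive_map T"
  shows "Im (map_trace T) = 0"
proof -
  have "cnj (map_trace T) = (\<Sum>a\<in>UNIV. \<Sum>b\<in>UNIV. cnj (T (mat_unit a b) $a$b))"
    unfolding map_trace_def cnj_sum ..
  also have "\<dots> = (\<Sum>a\<in>UNIV. \<Sum>b\<in>UNIV. T (mat_unit b a) $b$a)"
    by (intro sum.cong refl) (rule positive_map_units_herm[OF assms, symmetric])
  also have "\<dots> = map_trace T"
    unfolding map_trace_def by (rule sum.swap)
  finally show ?thesis by (metis Reals_cnj_iff complex_is_Real_iff)
qed

lemma congr_entry: "(adj Y ** B ** Y)$a$b = (\<Sum>k\<in>UNIV. \<Sum>l\<in>UNIV. cnj (Y$k$a) * B$k$l * Y$l$b)"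
proof -
  have "(adj Y ** B ** Y)$a$b = (\<Sum>l\<in>UNIV. \<Sum>k\<in>UNIV. cnj (Y$k$a) * B$k$l * Y$l$b)"
    unfolding matrix_matrix_mult_def adj_def by (simp add: sum_distrib_right)
  also have "\<dots> = (\<Sum>k\<in>UNIV. \<Sum>l\<in>UNIV. cnj (Y$k$a) * B$k$l * Y$l$b)" by (rule sum.swap)
  finally show ?thesis .
qed

lemma congr_linear:
  assumes "cmat_linear T" shows "cmat_linear (\<lambda>\<rho>. adj Y ** T \<rho> ** Y)"
proof -
  have "adj Y ** (A + B) ** Y = adj Y ** A ** Y + adj Y ** B ** Y" for A B
    by (simp add: vec_eq_iff congr_entry sum.distrib algebra_simps)
  moreover have "adj Y ** cmat_scale c A ** Y = cmat_scale c (adj Y ** A ** Y)" for c A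
    by (simp add: vec_eq_iff congr_entry cmat_scale_def sum_distrib_left algebra_simps)
  ultimately show ?thesis
    using assms unfolding cmat_linear_def by simp
qed

lemma qf_mult_vec: "qf X v = (\<Sum>i\<in>UNIV. cnj (v$i) * (X *v v)$i)"
  unfolding qf_def matrix_vector_mult_def by (simp add: sum_distrib_left mult.assoc)

lemma adj_mult_vec: "(\<Sum>i\<in>UNIV. cnj (v$i) * (adj Y *v u)$i) = (\<Sum>k\<in>UNIV. cnj ((Y *v v)$k) * u$k)"
proof -
  have "(\<Sum>i\<in>UNIV. cnj (v$i) * (adj Y *v u)$i) = (\<Sum>i\<in>UNIV. \<Sum>k\<in>UNIV. cnj (v$i) * cnj (Y$k$i) * u$k)"
    unfolding matrix_vector_mult_def adj_def by (simp add: sum_distrib_left mult.assoc)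
  also have "\<dots> = (\<Sum>k\<in>UNIV. \<Sum>i\<in>UNIV. cnj (v$i) * cnj (Y$k$i) * u$k)" by (rule sum.swap)
  also have "\<dots> = (\<Sum>k\<in>UNIV. cnj ((Y *v v)$k) * u$k)"
    unfolding matrix_vector_mult_def
    by (simp add: cnj_sum sum_distrib_right sum_distrib_left mult.commute mult.left_commute)
  finally show ?thesis .
qed

lemma qf_congr: "qf (adj Y ** B ** Y) v = qf B (Y *v v)"
  unfolding qf_mult_vec by (simp add: matrix_vector_mul_assoc[symmetric] adj_mult_vec)

lemma congr_positive: "positive_map T \<Longrightarrow> positive_map (\<lambda>\<rho>. adj Y ** T \<rho> ** Y)"
  unfolding positive_map_def psd_qf qf_congr by blast

lemma tensor_id_add:
  assumes "cmat_linear T" shows "tensor_id T (A + B) = tensor_id T A + tensor_id T B"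
proof -
  have blocks: "(\<chi> i j. (A + B) $ (i, snd p) $ (j, snd q))
      = (\<chi> i j. A $ (i, snd p) $ (j, snd q)) + (\<chi> i j. B $ (i, snd p) $ (j, snd q))" for p q
    by (simp add: vec_eq_iff)
  show ?thesis unfolding tensor_id_def blocks lin_add[OF assms] by (simp add: vec_eq_iff)
qed

lemma tensor_id_scale:
  assumes "cmat_linear T" shows "tensor_id T (cmat_scale c A) = cmat_scale c (tensor_id T A)"
proof -
  have blocks: "(\<chi> i j. (cmat_scale c A) $ (i, snd p) $ (j, snd q))
      = cmat_scale c (\<chi> i j. A $ (i, snd p) $ (j, snd q))" for p q
    by (simp add: vec_eq_iff cmat_scale_def)
  show ?thesis unfolding tensor_id_def blocks lin_scale[OF assms] by (simp add: cmat_scale_def)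
qed

text \<open>Reading vectors \<open>w, x \<in> \<complex>\<^sup>d \<otimes> \<complex>\<^sup>d\<close> as \<open>d \<times> d\<close> matrices \<open>W, X\<close>, this is \<open>W X\<^sup>\<dagger>\<close>.\<close>
definition pair_matrix :: "complex^('n\<times>'n) \<Rightarrow> complex^('n\<times>'n) \<Rightarrow> complex^'n^'n" where
  "pair_matrix w x = (\<chi> k a. \<Sum>l\<in>UNIV. w$(k,l) * cnj (x$(a,l)))"

lemma sum_pair: "(\<Sum>p\<in>(UNIV::('a\<times>'b) set). f p) = (\<Sum>k\<in>UNIV. \<Sum>m\<in>UNIV. f (k,m))"
  by (simp add: sum.cartesian_product UNIV_Times_UNIV[symmetric] del: UNIV_Times_UNIV)

lemma sum_swap_out: "(\<Sum>i\<in>A. \<Sum>a\<in>B. \<Sum>b\<in>C. f i a b) = (\<Sum>a\<in>B. \<Sum>b\<in>C. \<Sum>i\<in>A. (f i a b::'c::comm_monoid_add))"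
  by (subst sum.swap) (intro sum.cong refl sum.swap)

text \<open>Both sides
  are the same quadruple sum \<open>\<Sum>\<^sub>a\<^sub>b\<^sub>k\<^sub>l conj(Y\<^sub>k\<^sub>a) T(E\<^sub>a\<^sub>b)\<^sub>k\<^sub>l Y\<^sub>l\<^sub>b\<close>.\<close>
lemma qf_tensor_outer_eq_map_trace:
  fixes T :: "complex^'n^'n \<Rightarrow> complex^'n^'n" and w x :: "complex^('n\<times>'n)"
  assumes lin: "cmat_linear T"
  defines "Y \<equiv> pair_matrix w x"
  shows "qf (tensor_id T (outer x)) w = map_trace (\<lambda>\<rho>. adj Y ** T \<rho> ** Y)"
proof -
  define G where "G a b k l = T (mat_unit a b)$k$l" for a b k l
  define H where "H a b p q = cnj (w$p) * x$(a,snd p) * cnj (x$(b,snd q)) * G a b (fst p) (fst q) * w$q"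
    for a b p q
  have entry: "tensor_id T (outer x) $p$q =
     (\<Sum>a\<in>UNIV. \<Sum>b\<in>UNIV. x$(a,snd p) * cnj (x$(b,snd q)) * G a b (fst p) (fst q))" for p q
    unfolding tensor_id_def vec_lambda_beta
    by (subst lin_expand_entry[OF lin]) (simp add: G_def outer_def)
  have inner: "(\<Sum>m\<in>UNIV. \<Sum>n\<in>UNIV. H a b (k,m) (l,n)) = cnj (Y$k$a) * G a b k l * Y$l$b" for a b k l
  proof -
    have "cnj (Y$k$a) * G a b k l * Y$l$b =
       (\<Sum>m\<in>UNIV. cnj (w$(k,m)) * x$(a,m)) * G a b k l * (\<Sum>n\<in>UNIV. w$(l,n) * cnj (x$(b,n)))"
      unfolding Y_def pair_matrix_def by (simp add: cnj_sum)
    also have "\<dots> = (\<Sum>m\<in>UNIV. \<Sum>n\<in>UNIV. (cnj (w$(k,m)) * x$(a,m)) * G a b k l * (w$(l,n) * cnj (x$(b,n))))"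
      unfolding sum_distrib_left sum_distrib_right by (rule sum.swap)
    also have "\<dots> = (\<Sum>m\<in>UNIV. \<Sum>n\<in>UNIV. H a b (k,m) (l,n))"
      unfolding H_def by (intro sum.cong refl) (simp add: algebra_simps)
    finally show ?thesis ..
  qed
  have "qf (tensor_id T (outer x)) w = (\<Sum>p\<in>UNIV. \<Sum>q\<in>UNIV. \<Sum>a\<in>UNIV. \<Sum>b\<in>UNIV. H a b p q)"
    unfolding qf_def entry H_def sum_distrib_left sum_distrib_right by (simp add: mult.assoc)
  also have "\<dots> = (\<Sum>a\<in>UNIV. \<Sum>b\<in>UNIV. \<Sum>p\<in>UNIV. \<Sum>q\<in>UNIV. H a b p q)"
    by (subst sum_swap_out[symmetric]) (intro sum.cong refl sum_swap_out)
  also have "\<dots> = (\<Sum>a\<in>UNIV. \<Sum>b\<in>UNIV. \<Sum>k\<in>UNIV. \<Sum>l\<in>UNIV. \<Sum>m\<in>UNIV. \<Sum>n\<in>UNIV. H a b (k,m) (l,n))"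
    unfolding sum_pair by (intro sum.cong refl sum.swap)
  also have "\<dots> = (\<Sum>a\<in>UNIV. \<Sum>b\<in>UNIV. \<Sum>k\<in>UNIV. \<Sum>l\<in>UNIV. cnj (Y$k$a) * G a b k l * Y$l$b)"
    unfolding inner ..
  also have "\<dots> = map_trace (\<lambda>\<rho>. adj Y ** T \<rho> ** Y)"
    unfolding map_trace_def congr_entry G_def ..
  finally show ?thesis .
qed

lemma completely_positive_if_congr_traces_nonneg:
  fixes T :: "complex^'n^'n \<Rightarrow> complex^'n^'n"
  assumes lin: "cmat_linear T"
    and nonneg: "\<And>Y. 0 \<le> map_trace (\<lambda>\<rho>. adj Y ** T \<rho> ** Y)"
  shows "completely_positive T"
  unfolding completely_positive_def
proof (intro allI impI)
  fix X :: "complex^('n\<times>'n)^('n\<times>'n)" assume X: "psd X"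
  show "psd (tensor_id T X)"
    unfolding psd_qf
  proof
    fix w
    show "0 \<le> qf (tensor_id T X) w"
    proof (rule psd_functional_nonneg[where L = "\<lambda>A. qf (tensor_id T A) w"])
      show "qf (tensor_id T (A + B)) w = qf (tensor_id T A) w + qf (tensor_id T B) w" for A B
        by (simp add: tensor_id_add[OF lin] qf_add)
      show "qf (tensor_id T (cmat_scale c A)) w = c * qf (tensor_id T A) w" for c A
        by (simp add: tensor_id_scale[OF lin] qf_scale)
      show "0 \<le> qf (tensor_id T (outer x)) w" for x
        unfolding qf_tensor_outer_eq_map_trace[OF lin] by (rule nonneg)
    qed (rule X)
  qed
qed

theorem mainTheorem8:
  fixes T :: "complex^'n^'n \<Rightarrow> complex^'n^'n"
  assumes "cmat_linear T" and "positive_map T" and "\<not> completely_positive T"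
  shows "\<exists>Y::complex^'n^'n.
           positive_map (\<lambda>\<rho>. adj Y ** T \<rho> ** Y) \<and> map_trace (\<lambda>\<rho>. adj Y ** T \<rho> ** Y) < 0"
proof (rule ccontr)
  assume no_witness: "\<not> ?thesis"
  have "0 \<le> map_trace (\<lambda>\<rho>. adj Y ** T \<rho> ** Y)" for Y :: "complex^'n^'n"
  proof -
    have positive: "positive_map (\<lambda>\<rho>. adj Y ** T \<rho> ** Y)"
      using congr_positive[OF assms(2)] .
    then have "\<not> map_trace (\<lambda>\<rho>. adj Y ** T \<rho> ** Y) < 0"
      using no_witness by blast
    moreover have "Im (map_trace (\<lambda>\<rho>. adj Y ** T \<rho> ** Y)) = 0"
      using positive_map_trace_real[OF congr_linear[OF assms(1)] positive] .
    ultimately show ?thesis by (auto simp: less_complex_def less_eq_complex_def)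
  qed
  then have "completely_positive T"
    using completely_positive_if_congr_traces_nonneg[OF assms(1)] by blast
  with assms(3) show False ..
qed

end
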